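(* Assume the standing hypotheses in the context. In a front tracking solution, consider two adjacent jumps (jump vectors) $\sigma_i$ and $\sigma_j$ belonging to different families $i<j$, located at $x_i>x_j$, which interact, and let $\sigma_i'$, $\sigma_j'$ be the jump vectors of the outgoing $i$- and $j$-fronts after the interaction. Then $$\mathrm{span}\{\sigma_i,\sigma_j\}=\mathrm{span}\{\sigma_i',\sigma_j'\}.$$
   Context: Setting: $u_t+f(u)_x=0$ with $f:\Omega\to\mathbb{R}^n$ smooth, $\Omega\subseteq\mathbb{R}^n$ open, eigenvalues $\lambda_1<\dots<\lambda_n$ of $Df$ with right eigenvectors $r_i$. Standing assumptions: (H1) each field genuinely nonlinear ($r_i\bullet\lambda_i\neq0$) or linearly degenerate ($r_i\bullet\lambda_i\equiv0$); (H2) rarefaction curves form Riemann coordinates $w=(w_1,\dots,w_n)$ (only $w_i$ varies along $i$-rarefaction curves); (H3) shock and rarefaction curves coincide. $E=\{u\in\Omega:w_i(u)\in[a_i,b_i]\}$ compact, uniformly strictly hyperbolic; for $u^\pm\in E$ with $\omega_0=w(u^-)$, $\omega_i=(w_1(u^+),\dots,w_i(u^+),w_{i+1}(u^-),\dots,w_n(u^-))$ the vectors $r_i(u^-,u^+)$ (normalized $u(\omega_i)-u(\omega_{i-1})$, or $r_i(u(\omega_{i-1}))$ if $w_i$ does not jump) are assumed linearly independent. Front tracking solution with parameter $\nu$: piecewise constant solution with values in $E^\nu=\{u\in E:w_i(u)\in2^{-\nu}\mathbb{Z}\}$ obtained by solving each Riemann problem $[u^-,u^+]$ as the succession of simple problems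 $[u(\omega_{i-1}),u(\omega_i)]$ (contact discontinuity, shock with Rankine–Hugoniot speed, or rarefaction fronts with $w_i$-jump $2^{-\nu}$) and tracking interactions. A jump of family $i$ is a front across which only $w_i$ changes, identified with its jump vector $u(x+)-u(x-)$. *)

theory Defs
  imports "HOL-Analysis.Analysis"
begin

text \<open>C^k and C^infinity regularity on a set (derivatives taken at points of S;
  S will be open).  The k-th level asks for a Frechet derivative at every point
  whose directional derivatives are C^(k-1).\<close>
fun Ck_on :: "nat \<Rightarrow> 'a::real_normed_vector set \<Rightarrow> ('a \<Rightarrow> 'b::real_normed_vector) \<Rightarrow> bool" where
  "Ck_on 0 S g = continuous_on S g"
| "Ck_on (Suc k) S g =
     (\<exists>g'. (\<forall>x\<in>S. (g has_derivative g' x) (at x)) \<and> (\<forall>v. Ck_on k S (\<lambda>x. g' x v)))"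

definition smooth_on :: "'a::real_normed_vector set \<Rightarrow> ('a \<Rightarrow> 'b::real_normed_vector) \<Rightarrow> bool" where
  "smooth_on S g \<longleftrightarrow> (\<forall>k. Ck_on k S g)"

definition RTE :: "('v set) \<Rightarrow> ('v \<Rightarrow> (real, 'n::finite) vec) \<Rightarrow> (real, 'n) vec \<Rightarrow> (real, 'n) vec \<Rightarrow> 'v set" where
  "RTE \<Omega> w a b = {u \<in> \<Omega>. w u \<in> cbox a b}"

definition RTEnu :: "nat \<Rightarrow> ('v set) \<Rightarrow> ('v \<Rightarrow> (real, 'n::finite) vec) \<Rightarrow> (real, 'n) vec \<Rightarrow> (real, 'n) vec \<Rightarrow> 'v set" where
  "RTEnu \<nu> \<Omega> w a b = {u \<in> RTE \<Omega> w a b. \<forall>k. \<exists>z::int. w u $ k = of_int z / 2 ^ \<nu>}"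

definition omega_le :: "(real, 'n::{finite,linorder}) vec \<Rightarrow> (real, 'n) vec \<Rightarrow> 'n \<Rightarrow> (real, 'n) vec" where
  "omega_le wm wp i = (\<chi> k. if k \<le> i then wp $ k else wm $ k)"

definition omega_lt :: "(real, 'n::{finite,linorder}) vec \<Rightarrow> (real, 'n) vec \<Rightarrow> 'n \<Rightarrow> (real, 'n) vec" where
  "omega_lt wm wp i = (\<chi> k. if k < i then wp $ k else wm $ k)"

definition rvec :: "((real, 'n::{finite,linorder}) vec \<Rightarrow> (real, 'n) vec) \<Rightarrow> ('n \<Rightarrow> (real, 'n) vec \<Rightarrow> (real, 'n) vec)
     \<Rightarrow> (real, 'n) vec \<Rightarrow> (real, 'n) vec \<Rightarrow> 'n \<Rightarrow> (real, 'n) vec" where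
  "rvec uw r wm wp i =
     (if wp $ i \<noteq> wm $ i
      then (let d = uw (omega_le wm wp i) - uw (omega_lt wm wp i) in d /\<^sub>R norm d)
      else r i (uw (omega_lt wm wp i)))"

end

theory Submission
  imports Defs
begin

text \<open>
  In the plane of Riemann coordinates through \<open>w(u\<^sup>-)\<close> spanned by \<open>w\<^sub>i\<close> and \<open>w\<^sub>j\<close>,
  the states before, between and after the two interacting jumps, together with the intermediate
  state \<open>u(\<omega>\<^sub>i)\<close> of the outgoing waves, are the corners of a coordinate rectangle. By (H3)
  every side of such a rectangle is a shock, i.e. satisfies a Rankine-Hugoniot relation with some
  speed. If the four corners were not coplanar, comparing the two paths around the rectangle would
  force all four speeds to agree. Non-coplanarity is an open condition, so the same holds after
  moving the far corner a little along either coordinate line; hence \<open>f(u) - s u\<close> is locally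
  constant along both lines through that corner, and differentiating shows that \<open>s\<close> equals both
  \<open>\<lambda>\<^sub>i\<close> and \<open>\<lambda>\<^sub>j\<close> there, contradicting strict hyperbolicity. So the corners are coplanar,
  and as both pairs of adjacent sides are linearly independent they span the same plane.
\<close>

definition indep_pair :: "'a::real_vector \<Rightarrow> 'a \<Rightarrow> bool" where
  "indep_pair u v \<longleftrightarrow> (\<forall>\<alpha> \<beta>. \<alpha> *\<^sub>R u + \<beta> *\<^sub>R v = 0 \<longrightarrow> \<alpha> = 0 \<and> \<beta> = 0)"

lemma in_span_pair_iff: "x \<in> span {u, v} \<longleftrightarrow> (\<exists>\<alpha> \<beta>. x = \<alpha> *\<^sub>R u + \<beta> *\<^sub>R v)"
proof
  assume "x \<in> span {u, v}"
  then obtain \<alpha> where "x - \<alpha> *\<^sub>R u \<in> span {v}" unfolding span_breakdown_eq by blast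
  then obtain \<beta> where "x - \<alpha> *\<^sub>R u = \<beta> *\<^sub>R v" by (auto simp: span_singleton)
  then show "\<exists>\<alpha> \<beta>. x = \<alpha> *\<^sub>R u + \<beta> *\<^sub>R v" by (metis add.commute diff_eq_eq)
next
  assume "\<exists>\<alpha> \<beta>. x = \<alpha> *\<^sub>R u + \<beta> *\<^sub>R v"
  moreover have "u \<in> span {u, v}" "v \<in> span {u, v}" by (simp_all add: span_base)
  ultimately show "x \<in> span {u, v}" by (auto simp: span_add span_scale)
qed

lemma span_scaleR_cancel: "c *\<^sub>R x \<in> span S \<Longrightarrow> c \<noteq> 0 \<Longrightarrow> x \<in> span S"
  using span_scale[of "c *\<^sub>R x" S "inverse c"] by simp

lemma indep_pair_swap:
  assumes "indep_pair u v" shows "indep_pair v u"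
  unfolding indep_pair_def
proof (intro allI impI)
  fix \<alpha> \<beta> :: real assume "\<alpha> *\<^sub>R v + \<beta> *\<^sub>R u = 0"
  then have "\<beta> *\<^sub>R u + \<alpha> *\<^sub>R v = 0" by (simp add: add.commute)
  then show "\<alpha> = 0 \<and> \<beta> = 0" using assms unfolding indep_pair_def by blast
qed

lemma indep_pair_nonzero:
  assumes "indep_pair u v" shows "u \<noteq> 0" "v \<noteq> 0"
  using assms[unfolded indep_pair_def, rule_format, of 1 0]
    assms[unfolded indep_pair_def, rule_format, of 0 1] by auto

lemma indep_pair_scaleR_cancel:
  assumes "indep_pair (c *\<^sub>R u) (d *\<^sub>R v)" shows "indep_pair u v"
  unfolding indep_pair_def
proof (intro allI impI)
  fix \<alpha> \<beta> :: real assume "\<alpha> *\<^sub>R u + \<beta> *\<^sub>R v = 0"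
  have "c \<noteq> 0" "d \<noteq> 0" using indep_pair_nonzero[OF assms] by auto
  have "\<forall>\<alpha>' \<beta>'. (\<alpha>' * c) *\<^sub>R u + (\<beta>' * d) *\<^sub>R v = 0 \<longrightarrow> \<alpha>' = 0 \<and> \<beta>' = 0"
    using assms by (simp add: indep_pair_def)
  from this[rule_format, of "\<alpha> / c" "\<beta> / d"] show "\<alpha> = 0 \<and> \<beta> = 0"
    using \<open>\<alpha> *\<^sub>R u + \<beta> *\<^sub>R v = 0\<close> \<open>c \<noteq> 0\<close> \<open>d \<noteq> 0\<close> by simp
qed

lemma indep_pair_if_independent:
  assumes "independent {u, v}" "u \<noteq> v" shows "indep_pair u v"
  unfolding indep_pair_def
proof (intro allI impI)
  fix \<alpha> \<beta> :: real assume "\<alpha> *\<^sub>R u + \<beta> *\<^sub>R v = 0"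
  then have sum: "(\<Sum>x\<in>{u, v}. (if x = u then \<alpha> else \<beta>) *\<^sub>R x) = 0" using assms(2) by simp
  have "(if x = u then \<alpha> else \<beta>) = 0" if "x \<in> {u, v}" for x
    using independentD[OF assms(1) _ subset_refl sum that] by simp
  from this[of u] this[of v] show "\<alpha> = 0 \<and> \<beta> = 0" using assms(2) by simp
qed

lemma span_pair_eq_if_indep_pair:
  assumes "u \<in> span {a, c}" "v \<in> span {a, c}" "indep_pair u v"
  shows "span {u, v} = span {a, c}"
proof -
  obtain \<alpha> \<beta> \<gamma> \<delta> where u: "u = \<alpha> *\<^sub>R a + \<beta> *\<^sub>R c" and v: "v = \<gamma> *\<^sub>R a + \<delta> *\<^sub>R c"
    using assms(1,2) unfolding in_span_pair_iff by blast
  define D where "D = \<alpha> * \<delta> - \<beta> * \<gamma>"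
  have a: "D *\<^sub>R a = \<delta> *\<^sub>R u + (- \<beta>) *\<^sub>R v" and c: "D *\<^sub>R c = (- \<gamma>) *\<^sub>R u + \<alpha> *\<^sub>R v"
    unfolding u v D_def by (simp_all add: algebra_simps)
  have "D \<noteq> 0"
  proof
    assume "D = 0"
    then have "\<delta> *\<^sub>R u + (- \<beta>) *\<^sub>R v = 0" "(- \<gamma>) *\<^sub>R u + \<alpha> *\<^sub>R v = 0"
      using a c by simp_all
    then have "\<delta> = 0 \<and> - \<beta> = 0" "- \<gamma> = 0 \<and> \<alpha> = 0" using assms(3) unfolding indep_pair_def by blast+
    then show False using indep_pair_nonzero(1)[OF assms(3)] u by simp
  qed
  have "D *\<^sub>R a \<in> span {u, v}" "D *\<^sub>R c \<in> span {u, v}"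
    unfolding a c in_span_pair_iff by blast+
  then have "a \<in> span {u, v}" "c \<in> span {u, v}"
    using \<open>D \<noteq> 0\<close> by (auto intro: span_scaleR_cancel)
  then have "span {a, c} \<subseteq> span {u, v}" by (intro span_minimal) auto
  moreover have "span {u, v} \<subseteq> span {a, c}" using assms(1,2) by (intro span_minimal) auto
  ultimately show ?thesis by blast
qed

lemma RH_speeds_eq_if_not_coplanar:
  fixes p00 p10 p01 p11 F00 F10 F01 F11 :: "'a::real_vector"
  assumes indep: "indep_pair (p10 - p00) (p11 - p10)"
    and not_coplanar: "p01 - p00 \<notin> span {p10 - p00, p11 - p10}"
    and "F10 - F00 = \<sigma> *\<^sub>R (p10 - p00)" "F01 - F00 = \<tau> *\<^sub>R (p01 - p00)"
    and "F11 - F01 = \<kappa> *\<^sub>R (p11 - p01)" "F11 - F10 = \<rho> *\<^sub>R (p11 - p10)"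
  shows "\<sigma> = \<tau> \<and> \<kappa> = \<tau> \<and> \<rho> = \<tau>"
proof -
  have "F11 - F00 = (F11 - F01) + (F01 - F00)" "F11 - F00 = (F11 - F10) + (F10 - F00)" by simp_all
  then have "\<kappa> *\<^sub>R (p11 - p01) + \<tau> *\<^sub>R (p01 - p00) = \<rho> *\<^sub>R (p11 - p10) + \<sigma> *\<^sub>R (p10 - p00)"
    using assms(3-6) by simp
  moreover have "(\<kappa> - \<sigma>) *\<^sub>R (p10 - p00) + (\<kappa> - \<rho>) *\<^sub>R (p11 - p10) - (\<kappa> - \<tau>) *\<^sub>R (p01 - p00)
      = (\<kappa> *\<^sub>R (p11 - p01) + \<tau> *\<^sub>R (p01 - p00)) - (\<rho> *\<^sub>R (p11 - p10) + \<sigma> *\<^sub>R (p10 - p00))"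
    by (simp add: algebra_simps)
  ultimately have key: "(\<kappa> - \<sigma>) *\<^sub>R (p10 - p00) + (\<kappa> - \<rho>) *\<^sub>R (p11 - p10) = (\<kappa> - \<tau>) *\<^sub>R (p01 - p00)"
    by simp
  have "(\<kappa> - \<tau>) *\<^sub>R (p01 - p00) \<in> span {p10 - p00, p11 - p10}"
    unfolding key[symmetric] in_span_pair_iff by blast
  then have "\<kappa> = \<tau>"
    using not_coplanar span_scaleR_cancel by fastforce
  then have "(\<tau> - \<sigma>) *\<^sub>R (p10 - p00) + (\<tau> - \<rho>) *\<^sub>R (p11 - p10) = 0" using key by simp
  then have "\<tau> - \<sigma> = 0 \<and> \<tau> - \<rho> = 0" using indep unfolding indep_pair_def by blast
  with \<open>\<kappa> = \<tau>\<close> show ?thesis by simp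
qed

section \<open>Non-coplanarity is an open condition\<close>

text \<open>The determinant of the matrix \<open>(\<langle>v, z\<^sub>k\<rangle>)\<close> whose columns are indexed by \<open>v = a, c, b\<close>.\<close>
definition inner_det3 :: "'a::real_inner \<Rightarrow> 'a \<Rightarrow> 'a \<Rightarrow> 'a \<Rightarrow> 'a \<Rightarrow> 'a \<Rightarrow> real" where
  "inner_det3 z1 z2 z3 a c b =
     (a \<bullet> z1) * ((c \<bullet> z2) * (b \<bullet> z3) - (b \<bullet> z2) * (c \<bullet> z3))
   - (c \<bullet> z1) * ((a \<bullet> z2) * (b \<bullet> z3) - (b \<bullet> z2) * (a \<bullet> z3))
   + (b \<bullet> z1) * ((a \<bullet> z2) * (c \<bullet> z3) - (c \<bullet> z2) * (a \<bullet> z3))"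

lemma inner_det3_eq_0_if_in_span:
  assumes "b \<in> span {a, c}" shows "inner_det3 z1 z2 z3 a c b = 0"
proof -
  obtain \<alpha> \<beta> where b: "b = \<alpha> *\<^sub>R a + \<beta> *\<^sub>R c" using assms unfolding in_span_pair_iff by blast
  show ?thesis unfolding inner_det3_def b inner_add_left inner_scaleR_left by algebra
qed

lemma inner_det3_nonzero_if_not_in_span:
  assumes indep: "indep_pair a c" and b: "b \<notin> span {a, c}"
  shows "\<exists>z1 z2 z3. inner_det3 z1 z2 z3 a c b \<noteq> 0"
proof -
  have "a \<noteq> 0" using indep_pair_nonzero[OF indep] by simp
  define c' where "c' = c - (c \<bullet> a / (a \<bullet> a)) *\<^sub>R a"
  have c_eq: "c = c' + (c \<bullet> a / (a \<bullet> a)) *\<^sub>R a" by (simp add: c'_def)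
  have a_c': "a \<bullet> c' = 0" "c' \<bullet> a = 0"
    using \<open>a \<noteq> 0\<close> by (simp_all add: c'_def inner_diff_right inner_diff_left inner_commute)
  have "c' \<noteq> 0"
  proof
    assume "c' = 0"
    then have "(- (c \<bullet> a / (a \<bullet> a))) *\<^sub>R a + 1 *\<^sub>R c = 0" by (simp add: c'_def)
    then show False using indep[unfolded indep_pair_def, rule_format] by fastforce
  qed
  define b' where "b' = b - (b \<bullet> a / (a \<bullet> a)) *\<^sub>R a - (b \<bullet> c' / (c' \<bullet> c')) *\<^sub>R c'"
  have b_eq: "b = b' + (b \<bullet> a / (a \<bullet> a)) *\<^sub>R a + (b \<bullet> c' / (c' \<bullet> c')) *\<^sub>R c'"
    by (simp add: b'_def)
  have a_b': "a \<bullet> b' = 0" and c'_b': "c' \<bullet> b' = 0"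
    using \<open>a \<noteq> 0\<close> \<open>c' \<noteq> 0\<close> a_c' by (simp_all add: b'_def inner_diff_right inner_commute)
  have c_b': "c \<bullet> b' = 0" and c_c': "c \<bullet> c' = c' \<bullet> c'"
    by (subst c_eq, simp add: inner_add_left a_b' c'_b' a_c')+
  have b_b': "b \<bullet> b' = b' \<bullet> b'"
    by (subst b_eq) (simp add: inner_add_left a_b' c'_b')
  have "b' \<noteq> 0"
  proof
    assume "b' = 0"
    have "c' \<in> span {a, c}" unfolding c'_def by (intro span_diff span_scale span_base) auto
    then have "b \<in> span {a, c}" using \<open>b' = 0\<close> by (subst b_eq) (simp add: span_add span_scale span_base)
    then show False using b by contradiction
  qed
  have "inner_det3 a c' b' a c b = (a \<bullet> a) * (c' \<bullet> c') * (b' \<bullet> b')"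
    by (simp add: inner_det3_def a_c' a_b' c_b' c_c' b_b')
  then show ?thesis using \<open>a \<noteq> 0\<close> \<open>c' \<noteq> 0\<close> \<open>b' \<noteq> 0\<close> by (metis mult_eq_0_iff inner_eq_zero_iff)
qed

lemma eventually_not_in_span_pair:
  fixes av cv bv :: "'b::topological_space \<Rightarrow> 'a::real_inner"
  assumes "continuous_on S av" "continuous_on S cv" "continuous_on S bv" "t \<in> S"
    and "indep_pair (av t) (cv t)" "bv t \<notin> span {av t, cv t}"
  shows "\<forall>\<^sub>F s in at t within S. bv s \<notin> span {av s, cv s}"
proof -
  obtain z1 z2 z3 where nz: "inner_det3 z1 z2 z3 (av t) (cv t) (bv t) \<noteq> 0"
    using inner_det3_nonzero_if_not_in_span assms(5,6) by blast
  let ?det = "\<lambda>s. inner_det3 z1 z2 z3 (av s) (cv s) (bv s)"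
  have "continuous_on S ?det" unfolding inner_det3_def using assms(1-3) by (intro continuous_intros)
  then have "(?det \<longlongrightarrow> ?det t) (at t within S)" using assms(4) by (simp add: continuous_on_def)
  then have "\<forall>\<^sub>F s in at t within S. ?det s \<noteq> 0" using nz by (rule tendsto_imp_eventually_ne)
  then show ?thesis by eventually_elim (use inner_det3_eq_0_if_in_span in blast)
qed

section \<open>Rectangles of states joined by shocks\<close>

lemma eigenvalue_eq_RH_speed:
  fixes \<gamma> :: "real \<Rightarrow> 'a::real_normed_vector"
  assumes "at t within S \<noteq> bot" "t \<in> S"
    and \<gamma>: "(\<gamma> has_vector_derivative v) (at t within S)"
    and f: "(f has_derivative Df) (at (\<gamma> t))"
    and eigen: "v \<noteq> 0" "Df v = \<mu> *\<^sub>R v"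
    and RH: "\<forall>\<^sub>F s in at t within S. f (\<gamma> s) - f (\<gamma> t) = \<sigma> *\<^sub>R (\<gamma> s - \<gamma> t)"
  shows "\<mu> = \<sigma>"
proof -
  let ?g = "\<lambda>s. f (\<gamma> s) - \<sigma> *\<^sub>R \<gamma> s"
  have "((\<lambda>s. f (\<gamma> s)) has_vector_derivative Df v) (at t within S)"
    using vector_derivative_diff_chain_within[OF \<gamma> has_derivative_at_withinI[OF f]] by (simp add: o_def)
  moreover have "((\<lambda>s. \<sigma> *\<^sub>R \<gamma> s) has_vector_derivative \<sigma> *\<^sub>R v) (at t within S)"
    using bounded_linear.has_vector_derivative[OF bounded_linear_scaleR_right \<gamma>] .
  ultimately have "(?g has_vector_derivative Df v - \<sigma> *\<^sub>R v) (at t within S)"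
    by (rule has_vector_derivative_diff)
  moreover have "(?g has_vector_derivative 0) (at t within S)"
  proof -
    have "\<forall>\<^sub>F s in at t within S. ?g t = ?g s"
      using RH by eventually_elim (simp add: algebra_simps)
    then show ?thesis
      using has_derivative_transform_eventually[of "\<lambda>s. ?g t" "\<lambda>h. h *\<^sub>R 0" t S ?g] assms(2)
      by (simp add: has_vector_derivative_def)
  qed
  ultimately have "Df v - \<sigma> *\<^sub>R v = 0" by (rule vector_derivative_unique_within[OF assms(1)])
  then have "(\<mu> - \<sigma>) *\<^sub>R v = 0" using eigen(2) by (simp add: algebra_simps)
  then show ?thesis using eigen(1) by simp
qed

locale RH_rectangle =
  fixes f :: "'a::real_inner \<Rightarrow> 'a" and P :: "real \<Rightarrow> real \<Rightarrow> 'a" and X Y :: "real set"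
  assumes connected_X: "connected X" and connected_Y: "connected Y"
    and continuous_horizontal: "\<And>y. y \<in> Y \<Longrightarrow> continuous_on X (\<lambda>x. P x y)"
    and continuous_vertical: "\<And>x. x \<in> X \<Longrightarrow> continuous_on Y (P x)"
    and RH_horizontal: "\<And>x x' y. x \<in> X \<Longrightarrow> x' \<in> X \<Longrightarrow> y \<in> Y \<Longrightarrow>
      \<exists>s. f (P x' y) - f (P x y) = s *\<^sub>R (P x' y - P x y)"
    and RH_vertical: "\<And>x y y'. x \<in> X \<Longrightarrow> y \<in> Y \<Longrightarrow> y' \<in> Y \<Longrightarrow>
      \<exists>s. f (P x y') - f (P x y) = s *\<^sub>R (P x y' - P x y)"
    and indep_pair_jumps: "\<And>xm xp ym yp. xm \<in> X \<Longrightarrow> xp \<in> X \<Longrightarrow> ym \<in> Y \<Longrightarrow> yp \<in> Y \<Longrightarrow>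
      xm \<noteq> xp \<Longrightarrow> ym \<noteq> yp \<Longrightarrow> indep_pair (P xp ym - P xm ym) (P xp yp - P xp ym)"
begin

lemma RH_opposite_corner:
  assumes "x0 \<in> X" "x \<in> X" "y0 \<in> Y" "y \<in> Y" "x0 \<noteq> x" "y0 \<noteq> y"
    and not_coplanar: "P x0 y - P x0 y0 \<notin> span {P x y0 - P x0 y0, P x y - P x y0}"
    and \<sigma>: "f (P x y0) - f (P x0 y0) = \<sigma> *\<^sub>R (P x y0 - P x0 y0)"
    and \<tau>: "f (P x0 y) - f (P x0 y0) = \<tau> *\<^sub>R (P x0 y - P x0 y0)"
  shows "\<sigma> = \<tau> \<and> f (P x y) - f (P x0 y0) = \<tau> *\<^sub>R (P x y - P x0 y0)"
proof -
  obtain \<kappa> where \<kappa>: "f (P x y) - f (P x0 y) = \<kappa> *\<^sub>R (P x y - P x0 y)"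
    using RH_horizontal assms(1-4) by blast
  obtain \<rho> where \<rho>: "f (P x y) - f (P x y0) = \<rho> *\<^sub>R (P x y - P x y0)"
    using RH_vertical assms(1-4) by blast
  have speeds: "\<sigma> = \<tau> \<and> \<kappa> = \<tau> \<and> \<rho> = \<tau>"
    using RH_speeds_eq_if_not_coplanar[OF indep_pair_jumps[OF assms(1-6)] not_coplanar \<sigma> \<tau> \<kappa> \<rho>] .
  have "f (P x y) - f (P x0 y0) = (f (P x y) - f (P x y0)) + (f (P x y0) - f (P x0 y0))" by simp
  also have "\<dots> = \<rho> *\<^sub>R (P x y - P x y0) + \<sigma> *\<^sub>R (P x y0 - P x0 y0)" using \<sigma> \<rho> by simp
  also have "\<dots> = \<tau> *\<^sub>R (P x y - P x0 y0)" using speeds by (simp add: algebra_simps)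
  finally show ?thesis using speeds by simp
qed

lemma eventually_RH_horizontal_at_corner:
  assumes "x0 \<in> X" "x1 \<in> X" "y0 \<in> Y" "y1 \<in> Y" "x0 \<noteq> x1" "y0 \<noteq> y1"
    and not_coplanar: "P x0 y1 - P x0 y0 \<notin> span {P x1 y0 - P x0 y0, P x1 y1 - P x1 y0}"
    and \<tau>: "f (P x0 y1) - f (P x0 y0) = \<tau> *\<^sub>R (P x0 y1 - P x0 y0)"
  shows "\<forall>\<^sub>F x in at x1 within X. f (P x y1) - f (P x1 y1) = \<tau> *\<^sub>R (P x y1 - P x1 y1)"
proof -
  let ?A = "P x0 y0"
  have RH_from_A: "f (P x y1) - f ?A = \<tau> *\<^sub>R (P x y1 - ?A)"
    if x: "x \<in> X" "x \<noteq> x0" and np: "P x0 y1 - ?A \<notin> span {P x y0 - ?A, P x y1 - P x y0}" for x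
  proof -
    obtain \<sigma> where "f (P x y0) - f ?A = \<sigma> *\<^sub>R (P x y0 - ?A)"
      using RH_horizontal assms(1,3) x(1) by blast
    from RH_opposite_corner[OF assms(1) x(1) assms(3,4) x(2)[symmetric] assms(6) np this \<tau>]
    show ?thesis by simp
  qed
  have "\<forall>\<^sub>F x in at x1 within X. P x0 y1 - ?A \<notin> span {P x y0 - ?A, P x y1 - P x y0}"
  proof (rule eventually_not_in_span_pair[where av = "\<lambda>x. P x y0 - ?A" and cv = "\<lambda>x. P x y1 - P x y0"])
    show "continuous_on X (\<lambda>x. P x y0 - ?A)" "continuous_on X (\<lambda>x. P x y1 - P x y0)"
      using continuous_horizontal assms(3,4) by (auto intro: continuous_on_diff)
  qed (use assms indep_pair_jumps in auto)
  moreover have "\<forall>\<^sub>F x in at x1 within X. x \<noteq> x0" by (rule eventually_neq_at_within)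
  moreover have "\<forall>\<^sub>F x in at x1 within X. x \<in> X" by (simp add: eventually_at_filter)
  ultimately show ?thesis
  proof eventually_elim
    case (elim x)
    have "f (P x y1) - f (P x1 y1) = (f (P x y1) - f ?A) - (f (P x1 y1) - f ?A)" by simp
    also have "\<dots> = \<tau> *\<^sub>R ((P x y1 - ?A) - (P x1 y1 - ?A))"
      using RH_from_A[OF elim(3,2,1)] RH_from_A[OF assms(2) assms(5)[symmetric] not_coplanar]
      by (simp add: scaleR_right_diff_distrib)
    finally show ?case by simp
  qed
qed

lemma eventually_RH_vertical_at_corner:
  assumes "x0 \<in> X" "x1 \<in> X" "y0 \<in> Y" "y1 \<in> Y" "x0 \<noteq> x1" "y0 \<noteq> y1"
    and not_coplanar: "P x0 y1 - P x0 y0 \<notin> span {P x1 y0 - P x0 y0, P x1 y1 - P x1 y0}"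
    and \<sigma>: "f (P x1 y0) - f (P x0 y0) = \<sigma> *\<^sub>R (P x1 y0 - P x0 y0)"
  shows "\<forall>\<^sub>F y in at y1 within Y. f (P x1 y) - f (P x1 y1) = \<sigma> *\<^sub>R (P x1 y - P x1 y1)"
proof -
  let ?A = "P x0 y0"
  have RH_from_A: "f (P x1 y) - f ?A = \<sigma> *\<^sub>R (P x1 y - ?A)"
    if y: "y \<in> Y" "y \<noteq> y0" and np: "P x0 y - ?A \<notin> span {P x1 y0 - ?A, P x1 y - P x1 y0}" for y
  proof -
    obtain \<tau> where "f (P x0 y) - f ?A = \<tau> *\<^sub>R (P x0 y - ?A)"
      using RH_vertical assms(1,3) y(1) by blast
    from RH_opposite_corner[OF assms(1,2,3) y(1) assms(5) y(2)[symmetric] np \<sigma> this]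
    show ?thesis by simp
  qed
  have "\<forall>\<^sub>F y in at y1 within Y. P x0 y - ?A \<notin> span {P x1 y0 - ?A, P x1 y - P x1 y0}"
  proof (rule eventually_not_in_span_pair[where av = "\<lambda>y. P x1 y0 - ?A" and cv = "\<lambda>y. P x1 y - P x1 y0"])
    show "continuous_on Y (\<lambda>y. P x1 y - P x1 y0)" "continuous_on Y (\<lambda>y. P x0 y - ?A)"
      using continuous_vertical assms(1,2) by (auto intro: continuous_on_diff)
  qed (use assms indep_pair_jumps in auto)
  moreover have "\<forall>\<^sub>F y in at y1 within Y. y \<noteq> y0" by (rule eventually_neq_at_within)
  moreover have "\<forall>\<^sub>F y in at y1 within Y. y \<in> Y" by (simp add: eventually_at_filter)
  ultimately show ?thesis
  proof eventually_elim
    case (elim y)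
    have "f (P x1 y) - f (P x1 y1) = (f (P x1 y) - f ?A) - (f (P x1 y1) - f ?A)" by simp
    also have "\<dots> = \<sigma> *\<^sub>R ((P x1 y - ?A) - (P x1 y1 - ?A))"
      using RH_from_A[OF elim(3,2,1)] RH_from_A[OF assms(4) assms(6)[symmetric] not_coplanar]
      by (simp add: scaleR_right_diff_distrib)
    finally show ?case by simp
  qed
qed

lemma coplanar_if_distinct_eigenvalues:
  assumes "x0 \<in> X" "x1 \<in> X" "y0 \<in> Y" "y1 \<in> Y" "x0 \<noteq> x1" "y0 \<noteq> y1"
    and Df: "(f has_derivative Df) (at (P x1 y1))"
    and ex: "((\<lambda>x. P x y1) has_vector_derivative ex) (at x1 within X)" "ex \<noteq> 0" "Df ex = lx *\<^sub>R ex"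
    and ey: "(P x1 has_vector_derivative ey) (at y1 within Y)" "ey \<noteq> 0" "Df ey = ly *\<^sub>R ey"
    and "lx \<noteq> ly"
  shows "P x0 y1 - P x0 y0 \<in> span {P x1 y0 - P x0 y0, P x1 y1 - P x1 y0}"
proof (rule ccontr)
  assume not_coplanar: "P x0 y1 - P x0 y0 \<notin> span {P x1 y0 - P x0 y0, P x1 y1 - P x1 y0}"
  obtain \<tau> where \<tau>: "f (P x0 y1) - f (P x0 y0) = \<tau> *\<^sub>R (P x0 y1 - P x0 y0)"
    using RH_vertical assms(1,3,4) by blast
  obtain \<sigma> where \<sigma>: "f (P x1 y0) - f (P x0 y0) = \<sigma> *\<^sub>R (P x1 y0 - P x0 y0)"
    using RH_horizontal assms(1-3) by blast
  have "x1 islimpt X" "y1 islimpt Y"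
    using connected_imp_perfect[OF connected_X assms(2)] connected_imp_perfect[OF connected_Y assms(4)]
      assms(1-6) by blast+
  then have "at x1 within X \<noteq> bot" "at y1 within Y \<noteq> bot" by (simp_all add: trivial_limit_within)
  have "lx = \<tau>"
    using eigenvalue_eq_RH_speed[OF \<open>at x1 within X \<noteq> bot\<close> assms(2) ex(1) Df ex(2,3)]
      eventually_RH_horizontal_at_corner[OF assms(1-6) not_coplanar \<tau>] by blast
  moreover have "ly = \<sigma>"
    using eigenvalue_eq_RH_speed[OF \<open>at y1 within Y \<noteq> bot\<close> assms(4) ey(1) Df ey(2,3)]
      eventually_RH_vertical_at_corner[OF assms(1-6) not_coplanar \<sigma>] by blast
  moreover have "\<sigma> = \<tau>" using RH_opposite_corner[OF assms(1-6) not_coplanar \<sigma> \<tau>] by simp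
  ultimately show False using \<open>lx \<noteq> ly\<close> by simp
qed

lemma span_jumps_eq_if_distinct_eigenvalues:
  assumes "x0 \<in> X" "x1 \<in> X" "y0 \<in> Y" "y1 \<in> Y" "x0 \<noteq> x1" "y0 \<noteq> y1"
    and "(f has_derivative Df) (at (P x1 y1))"
    and "((\<lambda>x. P x y1) has_vector_derivative ex) (at x1 within X)" "ex \<noteq> 0" "Df ex = lx *\<^sub>R ex"
    and "(P x1 has_vector_derivative ey) (at y1 within Y)" "ey \<noteq> 0" "Df ey = ly *\<^sub>R ey"
    and "lx \<noteq> ly"
  shows "span {P x0 y1 - P x0 y0, P x1 y1 - P x0 y1} = span {P x1 y0 - P x0 y0, P x1 y1 - P x1 y0}"
proof -
  have coplanar: "P x0 y1 - P x0 y0 \<in> span {P x1 y0 - P x0 y0, P x1 y1 - P x1 y0}"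
    by (rule coplanar_if_distinct_eigenvalues[OF assms])
  have base: "P x1 y0 - P x0 y0 \<in> span {P x1 y0 - P x0 y0, P x1 y1 - P x1 y0}"
    "P x1 y1 - P x1 y0 \<in> span {P x1 y0 - P x0 y0, P x1 y1 - P x1 y0}" by (rule span_base, simp)+
  have "P x1 y1 - P x0 y1 = (P x1 y0 - P x0 y0) + (P x1 y1 - P x1 y0) - (P x0 y1 - P x0 y0)"
    by (simp add: algebra_simps)
  also have "\<dots> \<in> span {P x1 y0 - P x0 y0, P x1 y1 - P x1 y0}"
    by (rule span_diff[OF span_add[OF base] coplanar])
  finally have "P x1 y1 - P x0 y1 \<in> span {P x1 y0 - P x0 y0, P x1 y1 - P x1 y0}" .
  moreover have "indep_pair ((-1) *\<^sub>R (P x1 y1 - P x0 y1)) ((-1) *\<^sub>R (P x0 y1 - P x0 y0))"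
    using indep_pair_jumps[OF assms(2,1,4,3) assms(5,6)[symmetric]] by simp
  then have "indep_pair (P x0 y1 - P x0 y0) (P x1 y1 - P x0 y1)"
    by (rule indep_pair_swap[OF indep_pair_scaleR_cancel])
  ultimately show ?thesis by (rule span_pair_eq_if_indep_pair[OF coplanar])
qed

end

section \<open>Coordinate planes of Riemann invariants\<close>

lemma smooth_on_imp_has_derivative:
  assumes "smooth_on S g" obtains g' where "\<forall>x\<in>S. (g has_derivative g' x) (at x)"
  using assms unfolding smooth_on_def by (metis Ck_on.simps(2))

lemma inverse_derivative_maps_axis_to_eigenvector:
  fixes w uw :: "(real, 'n::finite) vec \<Rightarrow> (real, 'n) vec"
  assumes "open \<Omega>" "u \<in> \<Omega>" "\<forall>u\<in>\<Omega>. uw (w u) = u"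
    and "(w has_derivative Dw) (at u)" "(uw has_derivative DU) (at (w u))"
    and "\<forall>l. l \<noteq> k \<longrightarrow> Dw r $ l = 0" "r \<noteq> 0" "linear Df" "Df r = \<mu> *\<^sub>R r"
  shows "DU (axis k 1) \<noteq> 0 \<and> Df (DU (axis k 1)) = \<mu> *\<^sub>R DU (axis k 1)"
proof -
  have lin: "linear DU" by (rule has_derivative_linear[OF assms(5)])
  have "((\<lambda>x. uw (w x)) has_derivative (\<lambda>x. DU (Dw x))) (at u)"
    using has_derivative_compose[OF assms(4,5)] by simp
  moreover have "((\<lambda>x. uw (w x)) has_derivative (\<lambda>x. x)) (at u)"
    by (rule has_derivative_transform_within_open[OF has_derivative_ident assms(1,2)]) (use assms(3) in auto)
  ultimately have "(\<lambda>x. DU (Dw x)) = (\<lambda>x. x)" by (rule has_derivative_unique)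
  then have DU_Dw: "DU (Dw r) = r" by (rule fun_cong)
  define c where "c = Dw r $ k"
  have "Dw r = c *\<^sub>R axis k 1"
    using assms(6) by (auto simp: c_def vec_eq_iff axis_def)
  then have r: "r = c *\<^sub>R DU (axis k 1)"
    using DU_Dw linear_scale[OF lin] by simp
  then have "c \<noteq> 0" using assms(7) by auto
  then have "DU (axis k 1) = inverse c *\<^sub>R r" by (simp add: r)
  then show ?thesis using assms(7-9) \<open>c \<noteq> 0\<close> by (simp add: linear_scale)
qed

definition coord_plane :: "(real, 'n::finite) vec \<Rightarrow> 'n \<Rightarrow> 'n \<Rightarrow> real \<Rightarrow> real \<Rightarrow> (real, 'n) vec" where
  "coord_plane \<omega> i j x y = (\<chi> l. if l = i then x else if l = j then y else \<omega> $ l)"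

lemma coord_plane_component:
  "coord_plane \<omega> i j x y $ l = (if l = i then x else if l = j then y else \<omega> $ l)"
  by (simp add: coord_plane_def)

lemma coord_plane_mem_cbox:
  "\<omega> \<in> cbox a b \<Longrightarrow> x \<in> {a $ i..b $ i} \<Longrightarrow> y \<in> {a $ j..b $ j} \<Longrightarrow> coord_plane \<omega> i j x y \<in> cbox a b"
  by (auto simp: mem_box_cart coord_plane_component)

lemma coord_plane_line_x:
  "i \<noteq> j \<Longrightarrow> (\<lambda>x. coord_plane \<omega> i j x y) = (\<lambda>x. coord_plane \<omega> i j x0 y + (x - x0) *\<^sub>R axis i 1)"
  by (auto simp: fun_eq_iff vec_eq_iff coord_plane_component axis_def)

text \<open>The left-hand side is the eta-contracted \<open>\<lambda>y. coord_plane \<omega> i j x y\<close>, which also occurs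
  on the right; rewrite with it by \<open>subst\<close>, since unfolding loops.\<close>
lemma coord_plane_line_y:
  "i \<noteq> j \<Longrightarrow> coord_plane \<omega> i j x = (\<lambda>y. coord_plane \<omega> i j x y0 + (y - y0) *\<^sub>R axis j 1)"
  by (auto simp: fun_eq_iff vec_eq_iff coord_plane_component axis_def)

lemma continuous_on_coord_plane:
  assumes "i \<noteq> j"
  shows "continuous_on S (\<lambda>x. coord_plane \<omega> i j x y)" "continuous_on S (coord_plane \<omega> i j x)"
  by (subst coord_plane_line_x[OF assms, of \<omega> y 0] coord_plane_line_y[OF assms, of \<omega> x 0],
      intro continuous_intros)+

lemma has_vector_derivative_comp_coord_plane:
  assumes "i \<noteq> j" and g: "(g has_derivative Dg) (at (coord_plane \<omega> i j x y))"
  shows "((\<lambda>x. g (coord_plane \<omega> i j x y)) has_vector_derivative Dg (axis i 1)) (at x within S)"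
    and "((\<lambda>y. g (coord_plane \<omega> i j x y)) has_vector_derivative Dg (axis j 1)) (at y within T)"
proof -
  have "((\<lambda>x. coord_plane \<omega> i j x y) has_vector_derivative axis i 1) (at x within S)"
    "(coord_plane \<omega> i j x has_vector_derivative axis j 1) (at y within T)"
    by (subst coord_plane_line_x[OF assms(1), of \<omega> y x] coord_plane_line_y[OF assms(1), of \<omega> x y],
        auto intro!: derivative_eq_intros)+
  from this[THEN vector_derivative_diff_chain_within, OF has_derivative_at_withinI[OF g]]
  show "((\<lambda>x. g (coord_plane \<omega> i j x y)) has_vector_derivative Dg (axis i 1)) (at x within S)"
    and "((\<lambda>y. g (coord_plane \<omega> i j x y)) has_vector_derivative Dg (axis j 1)) (at y within T)"
    by (simp_all add: o_def)
qed

lemma coord_plane_tangents_eigenvectors: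
  fixes w uw :: "(real, 'n::finite) vec \<Rightarrow> (real, 'n) vec"
  assumes "i \<noteq> j" "open \<Omega>" "u \<in> \<Omega>" "\<forall>u\<in>\<Omega>. uw (w u) = u" and wu: "w u = coord_plane \<omega> i j x y"
    and "\<forall>u\<in>\<Omega>. (w has_derivative Dw u) (at u)" and DU: "(uw has_derivative DU) (at (w u))"
    and "\<forall>u\<in>\<Omega>. (f has_derivative Df u) (at u)"
    and "\<forall>k l. \<forall>u\<in>\<Omega>. l \<noteq> k \<longrightarrow> Dw u (r k u) $ l = 0"
    and "\<forall>k. \<forall>u\<in>\<Omega>. r k u \<noteq> 0 \<and> Df u (r k u) = lam k u *\<^sub>R r k u"
  shows "((\<lambda>x. uw (coord_plane \<omega> i j x y)) has_vector_derivative DU (axis i 1)) (at x within S)"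
    and "((\<lambda>y. uw (coord_plane \<omega> i j x y)) has_vector_derivative DU (axis j 1)) (at y within T)"
    and "DU (axis k 1) \<noteq> 0" "Df u (DU (axis k 1)) = lam k u *\<^sub>R DU (axis k 1)"
proof -
  show "((\<lambda>x. uw (coord_plane \<omega> i j x y)) has_vector_derivative DU (axis i 1)) (at x within S)"
    and "((\<lambda>y. uw (coord_plane \<omega> i j x y)) has_vector_derivative DU (axis j 1)) (at y within T)"
    using has_vector_derivative_comp_coord_plane[OF assms(1) DU[unfolded wu]] by blast+
  have "(w has_derivative Dw u) (at u)" using assms(3,6) by blast
  moreover have "\<forall>l. l \<noteq> k \<longrightarrow> Dw u (r k u) $ l = 0" using assms(3,9) by blast
  moreover have "r k u \<noteq> 0" "Df u (r k u) = lam k u *\<^sub>R r k u" using assms(3,10) by blast+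
  moreover have "linear (Df u)" using assms(3,8) has_derivative_linear by blast
  ultimately have "DU (axis k 1) \<noteq> 0 \<and> Df u (DU (axis k 1)) = lam k u *\<^sub>R DU (axis k 1)"
    using inverse_derivative_maps_axis_to_eigenvector[OF assms(2-4) _ DU] by blast
  then show "DU (axis k 1) \<noteq> 0" "Df u (DU (axis k 1)) = lam k u *\<^sub>R DU (axis k 1)" by blast+
qed

lemma coord_plane_jump_states:
  fixes \<omega>l \<omega>m \<omega>r :: "(real, 'n::{finite,linorder}) vec"
  assumes "i < j" "\<forall>l. l \<noteq> j \<longrightarrow> \<omega>m $ l = \<omega>l $ l" "\<forall>l. l \<noteq> i \<longrightarrow> \<omega>r $ l = \<omega>m $ l"
  shows "\<omega>l = coord_plane \<omega>l i j (\<omega>l $ i) (\<omega>l $ j)" "\<omega>m = coord_plane \<omega>l i j (\<omega>l $ i) (\<omega>r $ j)"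
    "\<omega>r = coord_plane \<omega>l i j (\<omega>r $ i) (\<omega>r $ j)"
    "omega_le \<omega>l \<omega>r i = coord_plane \<omega>l i j (\<omega>r $ i) (\<omega>l $ j)"
  using assms by (auto simp: vec_eq_iff coord_plane_component omega_le_def)

lemma indep_pair_rvec_coord_plane:
  fixes uw :: "(real, 'n::{finite,linorder}) vec \<Rightarrow> (real, 'n) vec"
  assumes "i < j" "xm \<noteq> xp" "ym \<noteq> yp"
    and indep: "independent (range (rvec uw r (coord_plane \<omega> i j xm ym) (coord_plane \<omega> i j xp yp)))"
    and inj: "inj (rvec uw r (coord_plane \<omega> i j xm ym) (coord_plane \<omega> i j xp yp))"
  shows "indep_pair (uw (coord_plane \<omega> i j xp ym) - uw (coord_plane \<omega> i j xm ym))
    (uw (coord_plane \<omega> i j xp yp) - uw (coord_plane \<omega> i j xp ym))"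
proof -
  let ?W = "coord_plane \<omega> i j" and ?rv = "rvec uw r (coord_plane \<omega> i j xm ym) (coord_plane \<omega> i j xp yp)"
  have "omega_le (?W xm ym) (?W xp yp) i = ?W xp ym" "omega_lt (?W xm ym) (?W xp yp) i = ?W xm ym"
    "omega_le (?W xm ym) (?W xp yp) j = ?W xp yp" "omega_lt (?W xm ym) (?W xp yp) j = ?W xp ym"
    using assms(1) by (auto simp: vec_eq_iff omega_le_def omega_lt_def coord_plane_component)
  then have rv: "?rv i = inverse (norm (uw (?W xp ym) - uw (?W xm ym))) *\<^sub>R (uw (?W xp ym) - uw (?W xm ym))"
    "?rv j = inverse (norm (uw (?W xp yp) - uw (?W xp ym))) *\<^sub>R (uw (?W xp yp) - uw (?W xp ym))"
    using assms(1-3) by (simp_all add: rvec_def coord_plane_component Let_def)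
  have "independent {?rv i, ?rv j}" using indep by (rule independent_mono) auto
  moreover have "?rv i \<noteq> ?rv j" using inj assms(1) by (auto dest: injD)
  ultimately have "indep_pair (?rv i) (?rv j)" by (rule indep_pair_if_independent)
  then show ?thesis unfolding rv by (rule indep_pair_scaleR_cancel)
qed

lemma RH_rectangle_coord_plane:
  fixes uw f :: "(real, 'n::{finite,linorder}) vec \<Rightarrow> (real, 'n) vec"
  assumes "i < j" "\<omega> \<in> cbox a b" "continuous_on (cbox a b) uw"
    and RH: "\<forall>k. \<forall>\<omega>m\<in>cbox a b. \<forall>\<omega>p\<in>cbox a b. (\<forall>l. l \<noteq> k \<longrightarrow> \<omega>p $ l = \<omega>m $ l) \<longrightarrow>
      (\<exists>s. f (uw \<omega>p) - f (uw \<omega>m) = s *\<^sub>R (uw \<omega>p - uw \<omega>m))"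
    and indep: "\<forall>\<omega>m\<in>cbox a b. \<forall>\<omega>p\<in>cbox a b.
      independent (range (rvec uw r \<omega>m \<omega>p)) \<and> inj (rvec uw r \<omega>m \<omega>p)"
  shows "RH_rectangle f (\<lambda>x y. uw (coord_plane \<omega> i j x y)) {a $ i..b $ i} {a $ j..b $ j}"
proof
  fix y assume "y \<in> {a $ j..b $ j}"
  then show "continuous_on {a $ i..b $ i} (\<lambda>x. uw (coord_plane \<omega> i j x y))"
    using assms(2) continuous_on_coord_plane[OF less_imp_neq[OF assms(1)]]
    by (intro continuous_on_compose2[OF assms(3)]) (auto intro: coord_plane_mem_cbox)
next
  fix x assume "x \<in> {a $ i..b $ i}"
  then show "continuous_on {a $ j..b $ j} (\<lambda>y. uw (coord_plane \<omega> i j x y))"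
    using assms(2) continuous_on_coord_plane[OF less_imp_neq[OF assms(1)]]
    by (intro continuous_on_compose2[OF assms(3)]) (auto intro: coord_plane_mem_cbox)
next
  fix x x' y assume "x \<in> {a $ i..b $ i}" "x' \<in> {a $ i..b $ i}" "y \<in> {a $ j..b $ j}"
  then show "\<exists>s. f (uw (coord_plane \<omega> i j x' y)) - f (uw (coord_plane \<omega> i j x y)) =
      s *\<^sub>R (uw (coord_plane \<omega> i j x' y) - uw (coord_plane \<omega> i j x y))"
    using assms(2) by (intro RH[rule_format, where k = i] coord_plane_mem_cbox) (auto simp: coord_plane_component)
next
  fix x y y' assume "x \<in> {a $ i..b $ i}" "y \<in> {a $ j..b $ j}" "y' \<in> {a $ j..b $ j}"
  then show "\<exists>s. f (uw (coord_plane \<omega> i j x y')) - f (uw (coord_plane \<omega> i j x y)) =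
      s *\<^sub>R (uw (coord_plane \<omega> i j x y') - uw (coord_plane \<omega> i j x y))"
    using assms(2) by (intro RH[rule_format, where k = j] coord_plane_mem_cbox) (auto simp: coord_plane_component)
next
  fix xm xp ym yp assume "xm \<in> {a $ i..b $ i}" "xp \<in> {a $ i..b $ i}" "ym \<in> {a $ j..b $ j}"
    "yp \<in> {a $ j..b $ j}" "xm \<noteq> xp" "ym \<noteq> yp"
  then have "coord_plane \<omega> i j xm ym \<in> cbox a b" "coord_plane \<omega> i j xp yp \<in> cbox a b"
    using assms(2) by (simp_all add: coord_plane_mem_cbox)
  from indep[rule_format, OF this] show "indep_pair (uw (coord_plane \<omega> i j xp ym) - uw (coord_plane \<omega> i j xm ym))
      (uw (coord_plane \<omega> i j xp yp) - uw (coord_plane \<omega> i j xp ym))"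
    using assms(1) \<open>xm \<noteq> xp\<close> \<open>ym \<noteq> yp\<close> by (intro indep_pair_rvec_coord_plane[where r = r]) simp_all
qed (rule connected_Icc)+

lemma RH_rectangle_Riemann_plane:
  fixes uw w f :: "(real, 'n::{finite,linorder}) vec \<Rightarrow> (real, 'n) vec"
  assumes "i < j" "\<omega> \<in> cbox a b" and box: "cbox a b \<subseteq> w ` \<Omega>" and uw_w: "\<forall>u\<in>\<Omega>. uw (w u) = u"
    and uw_deriv: "\<forall>\<omega>\<in>w ` \<Omega>. (uw has_derivative DU \<omega>) (at \<omega>)"
    and RH: "\<forall>k. \<forall>\<omega>m\<in>cbox a b. \<forall>\<omega>p\<in>cbox a b. (\<forall>l. l \<noteq> k \<longrightarrow> \<omega>p $ l = \<omega>m $ l) \<longrightarrow>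
      (\<exists>s. f (uw \<omega>p) - f (uw \<omega>m) = s *\<^sub>R (uw \<omega>p - uw \<omega>m))"
    and indep: "\<forall>u1\<in>RTE \<Omega> w a b. \<forall>u2\<in>RTE \<Omega> w a b.
      independent (range (rvec uw r (w u1) (w u2))) \<and> inj (rvec uw r (w u1) (w u2))"
  shows "RH_rectangle f (\<lambda>x y. uw (coord_plane \<omega> i j x y)) {a $ i..b $ i} {a $ j..b $ j}"
proof (rule RH_rectangle_coord_plane[OF assms(1,2) _ RH])
  show "continuous_on (cbox a b) uw"
    using uw_deriv box by (intro continuous_at_imp_continuous_on) (auto dest: has_derivative_continuous)
  have uw_box: "uw \<omega>' \<in> RTE \<Omega> w a b \<and> w (uw \<omega>') = \<omega>'" if in_box: "\<omega>' \<in> cbox a b" for \<omega>'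
  proof -
    obtain u where "u \<in> \<Omega>" "\<omega>' = w u" using subsetD[OF box in_box] by blast
    then show ?thesis using uw_w in_box by (simp add: RTE_def)
  qed
  show "\<forall>\<omega>m\<in>cbox a b. \<forall>\<omega>p\<in>cbox a b. independent (range (rvec uw r \<omega>m \<omega>p)) \<and> inj (rvec uw r \<omega>m \<omega>p)"
  proof (intro ballI)
    fix \<omega>m \<omega>p assume "\<omega>m \<in> cbox a b" "\<omega>p \<in> cbox a b"
    with uw_box indep[rule_format, of "uw \<omega>m" "uw \<omega>p"]
    show "independent (range (rvec uw r \<omega>m \<omega>p)) \<and> inj (rvec uw r \<omega>m \<omega>p)" by simp
  qed
qed

theorem lemma3p5:
  fixes f :: "(real, 'n::{finite,linorder}) vec \<Rightarrow> (real, 'n) vec"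
    and Df :: "(real, 'n) vec \<Rightarrow> (real, 'n) vec \<Rightarrow> (real, 'n) vec"
    and \<Omega> :: "((real, 'n) vec) set"
    and lam :: "'n \<Rightarrow> (real, 'n) vec \<Rightarrow> real"
    and Dlam :: "'n \<Rightarrow> (real, 'n) vec \<Rightarrow> (real, 'n) vec \<Rightarrow> real"
    and r :: "'n \<Rightarrow> (real, 'n) vec \<Rightarrow> (real, 'n) vec"
    and w :: "(real, 'n) vec \<Rightarrow> (real, 'n) vec"
    and Dw :: "(real, 'n) vec \<Rightarrow> (real, 'n) vec \<Rightarrow> (real, 'n) vec"
    and uw :: "(real, 'n) vec \<Rightarrow> (real, 'n) vec"
    and a b :: "(real, 'n) vec"
    and \<nu> :: nat
    and ul um ur :: "(real, 'n) vec"
    and i j :: 'n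
  assumes open_\<Omega>: "open \<Omega>"
    and f_smooth: "smooth_on \<Omega> f"
    and f_deriv: "\<forall>u\<in>\<Omega>. (f has_derivative Df u) (at u)"
    and lam_smooth: "\<forall>k. smooth_on \<Omega> (lam k)"
    and r_smooth: "\<forall>k. smooth_on \<Omega> (r k)"
    and eigen: "\<forall>k. \<forall>u\<in>\<Omega>. r k u \<noteq> 0 \<and> Df u (r k u) = lam k u *\<^sub>R r k u"
    and strict_hyp: "\<forall>k l. \<forall>u\<in>\<Omega>. k < l \<longrightarrow> lam k u < lam l u"
    and lam_deriv: "\<forall>k. \<forall>u\<in>\<Omega>. (lam k has_derivative Dlam k u) (at u)"
    and H1: "\<forall>k. (\<forall>u\<in>\<Omega>. Dlam k u (r k u) \<noteq> 0) \<or> (\<forall>u\<in>\<Omega>. Dlam k u (r k u) = 0)"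
    and w_smooth: "smooth_on \<Omega> w"
    and uw_smooth: "smooth_on (w ` \<Omega>) uw"
    and uw_w: "\<forall>u\<in>\<Omega>. uw (w u) = u"
    and w_uw: "\<forall>\<omega>\<in>w ` \<Omega>. w (uw \<omega>) = \<omega>"
    and w_deriv: "\<forall>u\<in>\<Omega>. (w has_derivative Dw u) (at u)"
    and H2: "\<forall>k l. \<forall>u\<in>\<Omega>. l \<noteq> k \<longrightarrow> Dw u (r k u) $ l = 0"
    and box: "cbox a b \<subseteq> w ` \<Omega>"
    and E_compact: "compact (RTE \<Omega> w a b)"
    and H3: "\<forall>k. \<forall>\<omega>m\<in>cbox a b. \<forall>\<omega>p\<in>cbox a b. (\<forall>l. l \<noteq> k \<longrightarrow> \<omega>p $ l = \<omega>m $ l) \<longrightarrow>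
               (\<exists>s::real. f (uw \<omega>p) - f (uw \<omega>m) = s *\<^sub>R (uw \<omega>p - uw \<omega>m))"
    and unif_hyp: "\<exists>c>0. \<forall>u\<in>RTE \<Omega> w a b. \<forall>k l. k < l \<longrightarrow> lam l u - lam k u \<ge> c"
    and indep: "\<forall>u1\<in>RTE \<Omega> w a b. \<forall>u2\<in>RTE \<Omega> w a b.
                  independent (range (rvec uw r (w u1) (w u2))) \<and> inj (rvec uw r (w u1) (w u2))"
    and states: "ul \<in> RTEnu \<nu> \<Omega> w a b" "um \<in> RTEnu \<nu> \<Omega> w a b" "ur \<in> RTEnu \<nu> \<Omega> w a b"
    and ij: "i < j"
    and jump_j: "\<forall>l. l \<noteq> j \<longrightarrow> w um $ l = w ul $ l" "w um $ j \<noteq> w ul $ j"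
    and jump_i: "\<forall>l. l \<noteq> i \<longrightarrow> w ur $ l = w um $ l" "w ur $ i \<noteq> w um $ i"
  shows "span {um - ul, ur - um} =
         span {uw (omega_le (w ul) (w ur) i) - ul, ur - uw (omega_le (w ul) (w ur) i)}"
proof -
  let ?X = "{a $ i..b $ i}" and ?Y = "{a $ j..b $ j}"
  define P where "P = (\<lambda>x y. uw (coord_plane (w ul) i j x y))"
  have P_apply: "P x y = uw (coord_plane (w ul) i j x y)" for x y by (simp add: P_def)
  define x0 where "x0 = w ul $ i"
  define y0 where "y0 = w ul $ j"
  define x1 where "x1 = w ur $ i"
  define y1 where "y1 = w ur $ j"
  have "i \<noteq> j" using ij by simp
  have states_in_E: "ul \<in> \<Omega>" "ur \<in> \<Omega>" "w ul \<in> cbox a b" "w ur \<in> cbox a b"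
    using states by (simp_all add: RTEnu_def RTE_def)
  obtain DU where DU: "\<forall>\<omega>\<in>w ` \<Omega>. (uw has_derivative DU \<omega>) (at \<omega>)"
    using uw_smooth by (rule smooth_on_imp_has_derivative)
  interpret RH_rectangle f P ?X ?Y
    unfolding P_def by (rule RH_rectangle_Riemann_plane[OF ij states_in_E(3) box uw_w DU H3 indep])
  note jump_coords = coord_plane_jump_states[OF ij jump_j(1) jump_i(1)]
  have corners: "ul = P x0 y0" "um = P x0 y1" "ur = P x1 y1" "uw (omega_le (w ul) (w ur) i) = P x1 y0"
    using jump_coords[symmetric] uw_w states
    by (simp_all add: P_apply x0_def y0_def x1_def y1_def RTEnu_def RTE_def)
  have corner_coords: "x0 \<in> ?X" "x1 \<in> ?X" "y0 \<in> ?Y" "y1 \<in> ?Y" "x0 \<noteq> x1" "y0 \<noteq> y1"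
    using states_in_E(3,4) by (simp_all add: x0_def y0_def x1_def y1_def mem_box_cart)
      (use jump_i jump_j \<open>i \<noteq> j\<close> in auto)
  have w_ur: "w ur = coord_plane (w ul) i j x1 y1" using jump_coords(3) by (simp add: x1_def y1_def)
  have DU_ur: "(uw has_derivative DU (w ur)) (at (w ur))" using DU states_in_E(2) by blast
  note tangents = coord_plane_tangents_eigenvectors[where w = w and uw = uw,
      OF \<open>i \<noteq> j\<close> open_\<Omega> states_in_E(2) uw_w w_ur w_deriv DU_ur f_deriv H2 eigen, folded P_apply]
  have "span {P x0 y1 - P x0 y0, P x1 y1 - P x0 y1} = span {P x1 y0 - P x0 y0, P x1 y1 - P x1 y0}"
  proof (rule span_jumps_eq_if_distinct_eigenvalues[OF corner_coords _ tangents(1) _ _ tangents(2)])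
    show "(f has_derivative Df ur) (at (P x1 y1))" using f_deriv states_in_E(2) corners(3) by simp
    show "lam i ur \<noteq> lam j ur" using strict_hyp states_in_E(2) ij by fastforce
  qed (fact tangents(3,4))+
  then show ?thesis by (simp only: corners(4)) (simp only: corners(1-3))
qed

end
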